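(* Let $P, P' \subset \mathbb{R}^n$ be centrally symmetric convex polyhedra, with centers of symmetry $c(P)$ and $c(P')$. For $v \in \mathbb{R}^n$ let $T_v$ denote translation by $v$, and consider the offset parameter $$f(v) = \min\{ r \geq 0 : T_v(P) \subset N(P';r)\}.$$ Then $f(v)$ is minimal (over all $v \in \mathbb{R}^n$) when $T_v$ moves the center $c(P)$ to the center $c(P')$, i.e. for $v = c(P') - c(P)$.
   Context: For a subset $C \subset \mathbb{R}^n$ and $r \geq 0$, the $r$-offset of $C$ is $N(C;r) = \{ p \in \mathbb{R}^n : d(p,q) \leq r \text{ for some } q \in C\}$, where $d$ is the Euclidean distance. A polyhedron here means a bounded convex polyhedron (convex polytope). It is centrally symmetric if there is a point $c(P)$ (its center) such that the point reflection through $c(P)$ maps $P$ onto itself. *)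

theory Defs
  imports "HOL-Analysis.Analysis"
begin

definition offset :: "'a::euclidean_space set \<Rightarrow> real \<Rightarrow> 'a set" where
  "offset C r = {p. \<exists>q\<in>C. dist p q \<le> r}"

definition transl :: "'a::euclidean_space \<Rightarrow> 'a \<Rightarrow> 'a" where
  "transl v x = x + v"

definition centrally_symmetric_wrt :: "'a::euclidean_space set \<Rightarrow> 'a \<Rightarrow> bool" where
  "centrally_symmetric_wrt P c \<longleftrightarrow> (\<lambda>x. 2 *\<^sub>R c - x) ` P = P"

definition offset_param :: "'a::euclidean_space set \<Rightarrow> 'a set \<Rightarrow> 'a \<Rightarrow> real" where
  "offset_param P P' v = Inf {r. 0 \<le> r \<and> transl v ` P \<subseteq> offset P' r}"

end

theory Submission
  imports Defs
begin

text \<open>If Q is convex and centrally symmetric about c', the translations v with T_v(P) \<subseteq> Q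
  form a convex set which, by the symmetry of P about c, is symmetric about c' - c; so it
  contains c' - c as soon as it is nonempty. The offset N(P';r) of a convex set symmetric
  about c' is again such a Q, hence every radius admissible for some v is admissible for c' - c.\<close>

lemma centrally_symmetric_wrt_iff:
  "centrally_symmetric_wrt P c \<longleftrightarrow> (\<forall>x\<in>P. 2 *\<^sub>R c - x \<in> P)"
proof
  assume "\<forall>x\<in>P. 2 *\<^sub>R c - x \<in> P"
  moreover have "x = 2 *\<^sub>R c - (2 *\<^sub>R c - x)" for x :: 'a by simp
  ultimately show "centrally_symmetric_wrt P c"
    unfolding centrally_symmetric_wrt_def by (metis image_subset_iff subset_antisym subsetI image_eqI)
qed (auto simp: centrally_symmetric_wrt_def)

lemma centrally_symmetric_wrt_reflect_mem:
  "centrally_symmetric_wrt P c \<Longrightarrow> x \<in> P \<Longrightarrow> 2 *\<^sub>R c - x \<in> P"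
  by (simp add: centrally_symmetric_wrt_iff)

lemma offset_eq_set_plus_cball: "offset C r = C + cball 0 r"
proof (intro set_eqI iffI)
  fix p assume "p \<in> offset C r"
  then obtain q where "q \<in> C" "dist p q \<le> r" unfolding offset_def by blast
  then have "q + (p - q) \<in> C + cball 0 r"
    by (intro set_plus_intro) (auto simp: dist_norm norm_minus_commute)
  then show "p \<in> C + cball 0 r" by simp
next
  fix p assume "p \<in> C + cball 0 r"
  then obtain q u where "q \<in> C" "norm u \<le> r" "p = q + u" by (auto elim: set_plus_elim)
  then show "p \<in> offset C r" unfolding offset_def by (auto simp: dist_norm intro!: bexI[of _ q])
qed

lemma convex_offset: "convex C \<Longrightarrow> convex (offset C r)"
  by (simp add: offset_eq_set_plus_cball convex_set_plus)

lemma centrally_symmetric_wrt_offset: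
  assumes "centrally_symmetric_wrt C c"
  shows "centrally_symmetric_wrt (offset C r) c"
  unfolding centrally_symmetric_wrt_iff
proof
  fix p assume "p \<in> offset C r"
  then obtain q where "q \<in> C" "dist p q \<le> r" unfolding offset_def by blast
  moreover have "2 *\<^sub>R c - q \<in> C"
    using centrally_symmetric_wrt_reflect_mem[OF assms \<open>q \<in> C\<close>] .
  moreover have "dist (2 *\<^sub>R c - p) (2 *\<^sub>R c - q) = dist p q"
    by (simp add: dist_norm norm_minus_commute)
  ultimately show "2 *\<^sub>R c - p \<in> offset C r"
    unfolding offset_def by (auto intro!: bexI[of _ "2 *\<^sub>R c - q"])
qed

lemma transl_image_subset_reflect:
  assumes "centrally_symmetric_wrt P c" "centrally_symmetric_wrt Q c'"
    and "transl v ` P \<subseteq> Q"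
  shows "transl (2 *\<^sub>R (c' - c) - v) ` P \<subseteq> Q"
proof
  fix y assume "y \<in> transl (2 *\<^sub>R (c' - c) - v) ` P"
  then obtain x where "x \<in> P" and y: "y = x + 2 *\<^sub>R (c' - c) - v" by (auto simp: transl_def)
  have "transl v (2 *\<^sub>R c - x) \<in> Q"
    using assms(3) centrally_symmetric_wrt_reflect_mem[OF assms(1) \<open>x \<in> P\<close>] by blast
  then have "2 *\<^sub>R c' - transl v (2 *\<^sub>R c - x) \<in> Q"
    by (rule centrally_symmetric_wrt_reflect_mem[OF assms(2)])
  moreover have "2 *\<^sub>R c' - transl v (2 *\<^sub>R c - x) = y"
    by (simp add: y transl_def algebra_simps)
  ultimately show "y \<in> Q" by simp
qed

lemma transl_image_subset_midpoint:
  assumes "convex Q" "transl u ` P \<subseteq> Q" "transl v ` P \<subseteq> Q"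
  shows "transl (midpoint u v) ` P \<subseteq> Q"
proof
  fix y assume "y \<in> transl (midpoint u v) ` P"
  then obtain x where "x \<in> P" and y: "y = x + midpoint u v" by (auto simp: transl_def)
  have "x + u \<in> Q" "x + v \<in> Q" using assms(2,3) \<open>x \<in> P\<close> by (auto simp: transl_def)
  then have "closed_segment (x + u) (x + v) \<subseteq> Q"
    using assms(1) by (simp add: convex_contains_segment)
  moreover have "y = midpoint (x + u) (x + v)"
    by (simp add: y midpoint_def scaleR_add_right flip: scaleR_add_left)
  ultimately show "y \<in> Q"
    using midpoint_in_closed_segment by blast
qed

lemma transl_image_subset_center:
  assumes "convex Q" "centrally_symmetric_wrt P c" "centrally_symmetric_wrt Q c'"
    and "transl v ` P \<subseteq> Q"
  shows "transl (c' - c) ` P \<subseteq> Q"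
proof -
  have "transl (midpoint v (2 *\<^sub>R (c' - c) - v)) ` P \<subseteq> Q"
    using transl_image_subset_midpoint[OF assms(1,4) transl_image_subset_reflect[OF assms(2-4)]] .
  moreover have "midpoint v (2 *\<^sub>R (c' - c) - v) = c' - c"
    by (simp add: midpoint_def)
  ultimately show ?thesis by simp
qed

lemma transl_image_subset_offset_exists:
  assumes "bounded P" "P' \<noteq> {}"
  shows "\<exists>r\<ge>0. transl v ` P \<subseteq> offset P' r"
proof -
  obtain q where "q \<in> P'" using assms(2) by blast
  have "bounded (transl v ` P)"
    using bounded_translation[OF assms(1), of v] by (simp add: transl_def add.commute)
  then obtain r where "0 < r" "transl v ` P \<subseteq> ball q r"
    using bounded_subset_ballD by blast
  moreover have "ball q r \<subseteq> offset P' r"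
    using \<open>q \<in> P'\<close> unfolding offset_def by (force simp: dist_commute)
  ultimately show ?thesis by (meson less_imp_le order_trans)
qed

theorem lemma1:
  fixes P P' :: "'a::euclidean_space set" and c c' :: 'a
  assumes "polytope P" and "polytope P'"
    and "P \<noteq> {}" and "P' \<noteq> {}"
    and "centrally_symmetric_wrt P c" and "centrally_symmetric_wrt P' c'"
  shows "\<forall>v. offset_param P P' (c' - c) \<le> offset_param P P' v"
proof
  fix v
  let ?radii = "\<lambda>v. {r. 0 \<le> r \<and> transl v ` P \<subseteq> offset P' r}"
  have "?radii v \<noteq> {}"
    using transl_image_subset_offset_exists[OF polytope_imp_bounded[OF assms(1)] assms(4)] by blast
  moreover have "bdd_below (?radii (c' - c))" by (rule bdd_belowI[of _ 0]) blast
  moreover have "?radii v \<subseteq> ?radii (c' - c)"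
    using transl_image_subset_center[OF convex_offset[OF polytope_imp_convex[OF assms(2)]]
        assms(5) centrally_symmetric_wrt_offset[OF assms(6)]] by blast
  ultimately show "offset_param P P' (c' - c) \<le> offset_param P P' v"
    unfolding offset_param_def by (rule cInf_superset_mono)
qed

end
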